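(* For every $n\ge 3$, the local metric dimension of the convex polytope graph $U_n$ is $lmd(U_n)=2$.
   Context: For $n\ge 3$, $U_n$ is the graph with vertex set $\{a_i,b_i,c_i,d_i,e_i : 1\le i\le n\}$ and edge set $\{a_ia_{i+1}, b_ib_{i+1}, e_ie_{i+1}, a_ib_i, b_ic_i, c_id_i, d_ie_i, c_{i+1}d_i : 1\le i\le n\}$, indices taken modulo $n$. A vertex $w$ resolves $u,v$ if $d(u,w)\neq d(v,w)$ ($d$ the graph distance). A set $W$ is a local resolving set if every two adjacent vertices are resolved by some element of $W$; $lmd(G)$ is the minimum cardinality of a local resolving set of $G$. *)

theory Defs
  imports Main
begin

(* Generic simple graph: vertex set V and symmetric adjacency relation Adj
   (edges only between vertices of V). *)

fun walk_len :: "('a \<Rightarrow> 'a \<Rightarrow> bool) \<Rightarrow> nat \<Rightarrow> 'a \<Rightarrow> 'a \<Rightarrow> bool" where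
  "walk_len Adj 0 u v = (u = v)"
| "walk_len Adj (Suc k) u v = (\<exists>w. Adj u w \<and> walk_len Adj k w v)"

(* graph distance: length of a shortest walk (graphs considered are connected) *)
definition gdist :: "('a \<Rightarrow> 'a \<Rightarrow> bool) \<Rightarrow> 'a \<Rightarrow> 'a \<Rightarrow> nat" where
  "gdist Adj u v = (LEAST k. walk_len Adj k u v)"

definition resolves :: "('a \<Rightarrow> 'a \<Rightarrow> bool) \<Rightarrow> 'a \<Rightarrow> 'a \<Rightarrow> 'a \<Rightarrow> bool" where
  "resolves Adj w u v \<longleftrightarrow> gdist Adj u w \<noteq> gdist Adj v w"

definition local_resolving_set :: "'a set \<Rightarrow> ('a \<Rightarrow> 'a \<Rightarrow> bool) \<Rightarrow> 'a set \<Rightarrow> bool" where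
  "local_resolving_set V Adj W \<longleftrightarrow> W \<subseteq> V \<and>
     (\<forall>u\<in>V. \<forall>v\<in>V. Adj u v \<longrightarrow> (\<exists>w\<in>W. resolves Adj w u v))"

definition lmd :: "'a set \<Rightarrow> ('a \<Rightarrow> 'a \<Rightarrow> bool) \<Rightarrow> nat" where
  "lmd V Adj = (LEAST k. \<exists>W. finite W \<and> local_resolving_set V Adj W \<and> card W = k)"

(* The convex polytope graph U_n; vertex x_i is (X, i) with indices 0..n-1 *)
datatype vkind = A | B | C | D | E

definition U_verts :: "nat \<Rightarrow> (vkind \<times> nat) set" where
  "U_verts n = {(t, i). i < n}"

definition U_arc :: "nat \<Rightarrow> vkind \<times> nat \<Rightarrow> vkind \<times> nat \<Rightarrow> bool" where
  "U_arc n x y \<longleftrightarrow> (case (x, y) of ((t, i), (s, j)) \<Rightarrow> i < n \<and> j < n \<and>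
     ((t = A \<and> s = A \<and> j = (i + 1) mod n)
    \<or> (t = B \<and> s = B \<and> j = (i + 1) mod n)
    \<or> (t = E \<and> s = E \<and> j = (i + 1) mod n)
    \<or> (t = A \<and> s = B \<and> j = i)
    \<or> (t = B \<and> s = C \<and> j = i)
    \<or> (t = C \<and> s = D \<and> j = i)
    \<or> (t = D \<and> s = E \<and> j = i)
    \<or> (t = C \<and> s = D \<and> i = (j + 1) mod n)))"

definition U_adj :: "nat \<Rightarrow> vkind \<times> nat \<Rightarrow> vkind \<times> nat \<Rightarrow> bool" where
  "U_adj n x y \<longleftrightarrow> U_arc n x y \<or> U_arc n y x"

end

(* A single vertex w cannot resolve every edge of an odd cycle: along a resolved edge the
   distance to w changes by exactly one, so its parity would flip an odd number of times around
   the cycle. U_n contains the 5-cycle b_0 c_0 d_0 c_1 b_1, hence lmd(U_n) >= 2.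

   For the upper bound, the distances to a_0, c_0 and d_0 are given by explicit formulas: a
   potential that is 1-Lipschitz along edges, vanishes at w and decreases by one along some edge
   at every other vertex is the distance to w. The rotation i -> i + 1 is an automorphism, which
   transports these formulas to every landmark. For n >= 9 the landmarks c_0 and c_h, with
   h = (n - 1) div 2, resolve every edge: each type of edge is left unresolved by c_0 only at a
   few indices near 0 or near n/2, and the shift by h moves those indices away. The cases
   3 <= n <= 8 are decided by evaluation. *)

theory Submission
  imports Defs
begin

lemma walk_len_iso:
  assumes "bij g" and adj: "\<And>x y. Adj (g x) (g y) \<longleftrightarrow> Adj x y"
  shows "walk_len Adj k (g u) (g v) \<longleftrightarrow> walk_len Adj k u v"
proof (induction k arbitrary: u)
  case 0
  show ?case using bij_is_inj[OF assms(1)] by (simp add: inj_eq)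
next
  case (Suc k)
  have "(\<exists>z. Adj (g u) z \<and> walk_len Adj k z (g v)) \<longleftrightarrow>
        (\<exists>z. Adj (g u) (g z) \<and> walk_len Adj k (g z) (g v))"
    using bij_is_surj[OF assms(1)] by (metis surj_f_inv_f)
  then show ?case using Suc adj by simp
qed

lemma gdist_iso:
  assumes "bij g" and "\<And>x y. Adj (g x) (g y) \<longleftrightarrow> Adj x y"
  shows "gdist Adj (g u) (g v) = gdist Adj u v"
  unfolding gdist_def walk_len_iso[of g Adj, OF assms] ..

lemma gdist_le_Suc:
  assumes "walk_len Adj k y w" "Adj x y"
  shows "gdist Adj x w \<le> Suc (gdist Adj y w)"
proof -
  have "walk_len Adj (gdist Adj y w) y w"
    unfolding gdist_def by (rule LeastI) (rule assms(1))
  then have "walk_len Adj (Suc (gdist Adj y w)) x w" using assms(2) by auto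
  then show ?thesis unfolding gdist_def by (rule Least_le)
qed

lemma gdist_eq_potential:
  assumes lip: "\<And>x y. Adj x y \<Longrightarrow> f x \<le> f y + 1"
    and descent:
      "\<And>x. x \<in> V \<Longrightarrow> x \<noteq> w \<Longrightarrow> \<exists>y\<in>V. Adj x y \<and> f x = f y + 1"
    and "f w = 0" "x \<in> V"
  shows "gdist Adj x w = f x"
proof -
  have walk: "walk_len Adj k x w" if "x \<in> V" "f x = k" for k x
    using that
  proof (induction k arbitrary: x)
    case 0
    then show ?case using descent by fastforce
  next
    case (Suc k)
    then obtain y where "y \<in> V" "Adj x y" "f x = f y + 1"
      using descent \<open>f w = 0\<close> by fastforce
    then show ?case using Suc by auto
  qed
  have lower: "f x \<le> k" if "walk_len Adj k x w" for k x
    using that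
  proof (induction k arbitrary: x)
    case 0
    then show ?case using \<open>f w = 0\<close> by simp
  next
    case (Suc k)
    then obtain y where "Adj x y" "walk_len Adj k y w" by auto
    then show ?case using Suc.IH lip by fastforce
  qed
  show ?thesis
    unfolding gdist_def by (rule Least_equality) (use walk lower \<open>x \<in> V\<close> in auto)
qed

lemma odd_closed_walk_not_resolved:
  assumes sym: "\<And>x y. Adj x y \<Longrightarrow> Adj y x"
    and walk: "\<And>i. i < m \<Longrightarrow> Adj (x i) (x (Suc i))"
    and closed: "x m = x 0" and "odd m"
  shows "\<exists>i<m. \<not> resolves Adj w (x i) (x (Suc i))"
proof (rule ccontr)
  assume "\<not> ?thesis"
  then have res: "gdist Adj (x i) w \<noteq> gdist Adj (x (Suc i)) w" if "i < m" for i
    using that by (auto simp: resolves_def)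
  have "0 < m" using \<open>odd m\<close> by (rule odd_pos)
  show False
  proof (cases "\<exists>k. walk_len Adj k (x 0) w")
    case True
    have reach: "\<exists>k. walk_len Adj k (x i) w" if "i \<le> m" for i
      using that
    proof (induction i)
      case (Suc i)
      then obtain k where "walk_len Adj k (x i) w" by auto
      moreover have "Adj (x (Suc i)) (x i)" using Suc.prems walk sym by simp
      ultimately have "walk_len Adj (Suc k) (x (Suc i)) w" by auto
      then show ?case ..
    qed (use True in auto)
    have "even (gdist Adj (x i) w + gdist Adj (x 0) w + i)" if "i \<le> m" for i
      using that
    proof (induction i)
      case (Suc i)
      obtain k k' where "walk_len Adj k (x i) w" "walk_len Adj k' (x (Suc i)) w"
        using reach Suc.prems by (meson Suc_leD)
      then have "gdist Adj (x (Suc i)) w \<le> Suc (gdist Adj (x i) w)"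
        "gdist Adj (x i) w \<le> Suc (gdist Adj (x (Suc i)) w)"
        using gdist_le_Suc walk sym Suc.prems by (metis Suc_le_lessD)+
      moreover have "gdist Adj (x i) w \<noteq> gdist Adj (x (Suc i)) w"
        using res Suc.prems by simp
      ultimately have "gdist Adj (x (Suc i)) w = Suc (gdist Adj (x i) w) \<or>
                       gdist Adj (x i) w = Suc (gdist Adj (x (Suc i)) w)"
        by linarith
      then show ?case using Suc by auto
    qed simp
    from this[of m] show False using closed \<open>odd m\<close> by simp
  next
    case False
    (* then w is unreachable from x 0 and x 1, whose distances are both the junk value
       LEAST k. False *)
    have "\<not> walk_len Adj k (x 1) w" for k
      using False walk[OF \<open>0 < m\<close>] by (metis One_nat_def walk_len.simps(2))
    then have "gdist Adj (x 0) w = gdist Adj (x 1) w"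
      using False unfolding gdist_def by metis
    then show False using res[OF \<open>0 < m\<close>] by simp
  qed
qed

lemma card_local_resolving_set_ge_2:
  assumes sym: "\<And>x y. Adj x y \<Longrightarrow> Adj y x"
    and in_V: "\<And>i. i \<le> m \<Longrightarrow> x i \<in> V"
    and walk: "\<And>i. i < m \<Longrightarrow> Adj (x i) (x (Suc i))"
    and "x m = x 0" "odd m"
    and "finite W" "local_resolving_set V Adj W"
  shows "2 \<le> card W"
proof (rule ccontr)
  assume "\<not> 2 \<le> card W"
  then have "\<forall>a\<in>W. \<forall>b\<in>W. a = b"
    using card_le_Suc0_iff_eq[OF \<open>finite W\<close>] by simp
  then obtain w where "W \<subseteq> {w}" by blast
  obtain i where "i < m" "\<not> resolves Adj w (x i) (x (Suc i))"
    using odd_closed_walk_not_resolved[of Adj m x w, OF sym walk] assms(4,5) by blast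
  moreover have "\<exists>w'\<in>W. resolves Adj w' (x i) (x (Suc i))"
    using \<open>local_resolving_set V Adj W\<close> \<open>i < m\<close> in_V walk
    unfolding local_resolving_set_def by (meson Suc_leI less_imp_le)
  ultimately show False using \<open>W \<subseteq> {w}\<close> by blast
qed

definition cyc_succ :: "nat \<Rightarrow> nat \<Rightarrow> nat" where
  "cyc_succ n i = (if Suc i = n then 0 else Suc i)"

definition cyc_pred :: "nat \<Rightarrow> nat \<Rightarrow> nat" where
  "cyc_pred n i = (if i = 0 then n - 1 else i - 1)"

lemma cyc_succ_eq_mod: "i < n \<Longrightarrow> cyc_succ n i = (i + 1) mod n"
  unfolding cyc_succ_def by (simp add: mod_Suc)

lemma cyc_succ_less: "i < n \<Longrightarrow> cyc_succ n i < n"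
  unfolding cyc_succ_def by auto

lemma cyc_pred_less: "i < n \<Longrightarrow> cyc_pred n i < n"
  unfolding cyc_pred_def by auto

lemma cyc_succ_pred [simp]: "i < n \<Longrightarrow> cyc_succ n (cyc_pred n i) = i"
  unfolding cyc_succ_def cyc_pred_def by auto

lemma cyc_pred_succ [simp]: "i < n \<Longrightarrow> cyc_pred n (cyc_succ n i) = i"
  unfolding cyc_succ_def cyc_pred_def by auto

lemma U_arc_iff:
  "U_arc n (t, i) (s, j) \<longleftrightarrow> i < n \<and> j < n \<and>
     ((t = A \<and> s = A \<and> j = cyc_succ n i)
    \<or> (t = B \<and> s = B \<and> j = cyc_succ n i)
    \<or> (t = E \<and> s = E \<and> j = cyc_succ n i)
    \<or> (t = A \<and> s = B \<and> j = i)
    \<or> (t = B \<and> s = C \<and> j = i)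
    \<or> (t = C \<and> s = D \<and> j = i)
    \<or> (t = D \<and> s = E \<and> j = i)
    \<or> (t = C \<and> s = D \<and> i = cyc_succ n j))"
  by (cases "i < n \<and> j < n") (auto simp: U_arc_def cyc_succ_eq_mod)

fun U_nbrs :: "nat \<Rightarrow> vkind \<times> nat \<Rightarrow> (vkind \<times> nat) list" where
  "U_nbrs n (A, i) = [(A, cyc_pred n i), (A, cyc_succ n i), (B, i)]"
| "U_nbrs n (B, i) = [(B, cyc_pred n i), (B, cyc_succ n i), (A, i), (C, i)]"
| "U_nbrs n (C, i) = [(B, i), (D, i), (D, cyc_pred n i)]"
| "U_nbrs n (D, i) = [(C, i), (C, cyc_succ n i), (E, i)]"
| "U_nbrs n (E, i) = [(E, cyc_pred n i), (E, cyc_succ n i), (D, i)]"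

lemma U_adj_iff_nbrs:
  "U_adj n (t, i) (s, j) \<longleftrightarrow> i < n \<and> (s, j) \<in> set (U_nbrs n (t, i))"
proof
  assume "U_adj n (t, i) (s, j)"
  then show "i < n \<and> (s, j) \<in> set (U_nbrs n (t, i))"
    unfolding U_adj_def U_arc_iff by (cases t) (auto simp: cyc_succ_less)
next
  assume "i < n \<and> (s, j) \<in> set (U_nbrs n (t, i))"
  then show "U_adj n (t, i) (s, j)"
    unfolding U_adj_def by (cases t) (auto simp: U_arc_iff cyc_succ_less cyc_pred_less)
qed

lemma U_nbrs_less: "i < n \<Longrightarrow> y \<in> set (U_nbrs n (t, i)) \<Longrightarrow> snd y < n"
  by (cases t) (auto simp: cyc_succ_less cyc_pred_less)

lemma U_adj_sym: "U_adj n x y \<Longrightarrow> U_adj n y x"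
  unfolding U_adj_def by auto

(* The identity off the vertex set, so that it is a bijection of the whole type. *)
definition U_rot :: "nat \<Rightarrow> vkind \<times> nat \<Rightarrow> vkind \<times> nat" where
  "U_rot n x = (fst x, if snd x < n then cyc_succ n (snd x) else snd x)"

definition U_rot_inv :: "nat \<Rightarrow> vkind \<times> nat \<Rightarrow> vkind \<times> nat" where
  "U_rot_inv n x = (fst x, if snd x < n then cyc_pred n (snd x) else snd x)"

lemma bij_U_rot: "bij (U_rot n)"
proof (rule o_bij)
  show "U_rot_inv n \<circ> U_rot n = id" "U_rot n \<circ> U_rot_inv n = id"
    by (auto simp: U_rot_def U_rot_inv_def cyc_succ_less cyc_pred_less)
qed

lemma U_nbrs_rot:
  "i < n \<Longrightarrow> U_nbrs n (U_rot n (t, i)) = map (U_rot n) (U_nbrs n (t, i))"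
  by (cases t) (auto simp: U_rot_def cyc_succ_less cyc_pred_less)

lemma U_adj_rot: "U_adj n (U_rot n x) (U_rot n y) \<longleftrightarrow> U_adj n x y"
proof -
  obtain t i where x: "x = (t, i)" by fastforce
  show ?thesis
  proof (cases "i < n")
    case True
    have "U_adj n (U_rot n x) (U_rot n y) \<longleftrightarrow> U_rot n y \<in> U_rot n ` set (U_nbrs n x)"
      using True U_adj_iff_nbrs[of n t "cyc_succ n i"] U_nbrs_rot[OF True]
      by (cases "U_rot n y") (simp add: x U_rot_def cyc_succ_less)
    also have "\<dots> \<longleftrightarrow> U_adj n x y"
      using True inj_image_mem_iff[OF bij_is_inj[OF bij_U_rot]] U_adj_iff_nbrs[of n t i]
      by (cases y) (simp add: x)
    finally show ?thesis .
  next
    case False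
    then show ?thesis by (cases y) (simp add: x U_rot_def U_adj_iff_nbrs)
  qed
qed

lemma gdist_U_rot: "gdist (U_adj n) (U_rot n x) (U_rot n y) = gdist (U_adj n) x y"
  by (rule gdist_iso) (simp_all add: bij_U_rot U_adj_rot)

lemma gdist_U_rot_funpow:
  "gdist (U_adj n) ((U_rot n ^^ p) x) ((U_rot n ^^ p) y) = gdist (U_adj n) x y"
  by (induction p) (simp_all add: gdist_U_rot)

lemma U_rot_funpow: "i < n \<Longrightarrow> (U_rot n ^^ p) (t, i) = (t, (i + p) mod n)"
  by (induction p) (simp_all add: U_rot_def cyc_succ_eq_mod mod_Suc_eq)

definition rel_idx :: "nat \<Rightarrow> nat \<Rightarrow> nat \<Rightarrow> nat" where
  "rel_idx n p i = (if p \<le> i then i - p else i + n - p)"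

lemma rel_idx_less: "i < n \<Longrightarrow> p < n \<Longrightarrow> rel_idx n p i < n"
  unfolding rel_idx_def by auto

lemma rel_idx_0 [simp]: "rel_idx n 0 i = i"
  unfolding rel_idx_def by simp

lemma rel_idx_succ:
  "i < n \<Longrightarrow> p < n \<Longrightarrow> rel_idx n p (cyc_succ n i) = cyc_succ n (rel_idx n p i)"
  unfolding rel_idx_def cyc_succ_def by auto

lemma gdist_U_rel_idx:
  assumes "i < n" "p < n"
  shows "gdist (U_adj n) (t, i) (X, p) = gdist (U_adj n) (t, rel_idx n p i) (X, 0)"
proof -
  have "(U_rot n ^^ p) (t, rel_idx n p i) = (t, i)" "(U_rot n ^^ p) (X, 0) = (X, p)"
    using assms by (simp_all add: U_rot_funpow rel_idx_less, simp add: rel_idx_def)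
  then show ?thesis using gdist_U_rot_funpow[of n p "(t, rel_idx n p i)" "(X, 0)"] by simp
qed

definition cyc_dist :: "nat \<Rightarrow> nat \<Rightarrow> nat" where
  "cyc_dist n i = min i (n - i)"

(* Distances on the n-cycle from i to the arc {n - 1, 0}, resp. {0, 1}. *)
definition cyc_dist_left :: "nat \<Rightarrow> nat \<Rightarrow> nat" where
  "cyc_dist_left n i = min i (n - 1 - i)"

definition cyc_dist_right :: "nat \<Rightarrow> nat \<Rightarrow> nat" where
  "cyc_dist_right n i = (if i = 0 then 0 else min (i - 1) (n - i))"

(* Distance between two C-vertices (or two D-vertices) whose indices are x apart on the
   cycle: zigzag through the C-D layer, or detour through the B-cycle (resp. E-cycle). *)
definition inner_dist :: "nat \<Rightarrow> nat" where
  "inner_dist x = min (2 * x) (x + 2)"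

(* Distance to (X, 0) for X \<in> {A, C, D}; the value for X \<in> {B, E} is junk. *)
fun origin_dist :: "nat \<Rightarrow> vkind \<Rightarrow> vkind \<times> nat \<Rightarrow> nat" where
  "origin_dist n A (A, i) = cyc_dist n i"
| "origin_dist n A (B, i) = cyc_dist n i + 1"
| "origin_dist n A (C, i) = cyc_dist n i + 2"
| "origin_dist n A (D, i) = cyc_dist_left n i + 3"
| "origin_dist n A (E, i) = cyc_dist_left n i + 4"
| "origin_dist n C (A, i) = cyc_dist n i + 2"
| "origin_dist n C (B, i) = cyc_dist n i + 1"
| "origin_dist n C (C, i) = inner_dist (cyc_dist n i)"
| "origin_dist n C (D, i) = inner_dist (cyc_dist_left n i) + 1"
| "origin_dist n C (E, i) = cyc_dist_left n i + 2"
| "origin_dist n D (A, i) = cyc_dist_right n i + 3"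
| "origin_dist n D (B, i) = cyc_dist_right n i + 2"
| "origin_dist n D (C, i) = inner_dist (cyc_dist_right n i) + 1"
| "origin_dist n D (D, i) = inner_dist (cyc_dist n i)"
| "origin_dist n D (E, i) = cyc_dist n i + 1"
| "origin_dist n _ _ = 0"

lemmas cyc_dist_defs = cyc_dist_def cyc_dist_left_def cyc_dist_right_def inner_dist_def
  cyc_succ_def cyc_pred_def min_def

lemma origin_dist_nbr_le:
  assumes "3 \<le> n" "i < n" "y \<in> set (U_nbrs n (t, i))"
  shows "origin_dist n X y \<le> origin_dist n X (t, i) + 1"
  using assms by (cases X; cases t) (auto simp: cyc_dist_defs)

lemma origin_dist_descent:
  assumes "X \<in> {A, C, D}" "3 \<le> n" "i < n" "(t, i) \<noteq> (X, 0)"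
  shows "\<exists>y\<in>set (U_nbrs n (t, i)). origin_dist n X (t, i) = origin_dist n X y + 1"
  using assms by (cases X; cases t; auto simp: cyc_dist_defs; arith)

lemma gdist_U_origin:
  assumes "X \<in> {A, C, D}" "3 \<le> n" "i < n"
  shows "gdist (U_adj n) (t, i) (X, 0) = origin_dist n X (t, i)"
proof (rule gdist_eq_potential[where V = "U_verts n"])
  fix x y assume "U_adj n x y"
  moreover obtain s j u k where "x = (s, j)" "y = (u, k)" by fastforce
  ultimately have "k < n" "x \<in> set (U_nbrs n (u, k))"
    using U_adj_sym[of n x y] by (simp_all add: U_adj_iff_nbrs)
  then show "origin_dist n X x \<le> origin_dist n X y + 1"
    using origin_dist_nbr_le[OF assms(2)] \<open>y = (u, k)\<close> by blast
next
  fix x assume "x \<in> U_verts n" "x \<noteq> (X, 0)"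
  then obtain s j where x: "x = (s, j)" "j < n" by (cases x) (simp add: U_verts_def)
  then obtain y where y: "y \<in> set (U_nbrs n x)" "origin_dist n X x = origin_dist n X y + 1"
    using origin_dist_descent[OF assms(1,2) \<open>j < n\<close>, of s] \<open>x \<noteq> (X, 0)\<close> by auto
  have "snd y < n" using U_nbrs_less[OF \<open>j < n\<close>, of y s] y(1) x(1) by simp
  then have "y \<in> U_verts n" by (cases y) (simp add: U_verts_def)
  moreover have "U_adj n x y" using y(1) x U_adj_iff_nbrs[of n s j "fst y" "snd y"] by simp
  ultimately show "\<exists>y\<in>U_verts n. U_adj n x y \<and> origin_dist n X x = origin_dist n X y + 1"
    using y(2) by blast
qed (use assms in \<open>auto simp: U_verts_def cyc_dist_def inner_dist_def\<close>)

definition landmark_dist :: "nat \<Rightarrow> vkind \<times> nat \<Rightarrow> vkind \<times> nat \<Rightarrow> nat" where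
  "landmark_dist n w x = origin_dist n (fst w) (fst x, rel_idx n (snd w) (snd x))"

lemma gdist_U_landmark:
  assumes "fst w \<in> {A, C, D}" "snd w < n" "3 \<le> n" "i < n"
  shows "gdist (U_adj n) (t, i) w = landmark_dist n w (t, i)"
proof -
  obtain X p where w: "w = (X, p)" by fastforce
  have "gdist (U_adj n) (t, i) (X, p) = gdist (U_adj n) (t, rel_idx n p i) (X, 0)"
    by (rule gdist_U_rel_idx) (use assms w in auto)
  also have "\<dots> = origin_dist n X (t, rel_idx n p i)"
    by (rule gdist_U_origin) (use assms w rel_idx_less in auto)
  finally show ?thesis by (simp add: w landmark_dist_def)
qed

(* Phrased over explicit lists so that it can be decided by evaluation for small n. *)
definition separates_edges :: "nat \<Rightarrow> (vkind \<times> nat) list \<Rightarrow> bool" where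
  "separates_edges n ws \<longleftrightarrow>
     (\<forall>i\<in>set [0..<n]. \<forall>t\<in>set [A, B, C, D, E]. \<forall>y\<in>set (U_nbrs n (t, i)).
        \<exists>w\<in>set ws. landmark_dist n w (t, i) \<noteq> landmark_dist n w y)"

lemma local_resolving_set_if_separates_edges:
  assumes "set ws \<subseteq> {A, C, D} \<times> {..<n}" "3 \<le> n" "separates_edges n ws"
  shows "local_resolving_set (U_verts n) (U_adj n) (set ws)"
  unfolding local_resolving_set_def
proof (intro conjI ballI impI)
  show "set ws \<subseteq> U_verts n" using assms(1) by (auto simp: U_verts_def)
next
  fix u v assume "U_adj n u v"
  then obtain t i s j
    where uv: "u = (t, i)" "v = (s, j)" "i < n" "(s, j) \<in> set (U_nbrs n (t, i))"
    by (cases u; cases v) (auto simp: U_adj_iff_nbrs)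
  have "j < n" using U_nbrs_less uv by fastforce
  have "t \<in> set [A, B, C, D, E]" by (cases t) auto
  then obtain w where "w \<in> set ws" "landmark_dist n w (t, i) \<noteq> landmark_dist n w (s, j)"
    using assms(3) uv unfolding separates_edges_def by fastforce
  moreover have "fst w \<in> {A, C, D}" "snd w < n" using \<open>w \<in> set ws\<close> assms(1) by auto
  ultimately show "\<exists>w\<in>set ws. resolves (U_adj n) w u v"
    using gdist_U_landmark[OF _ _ assms(2) \<open>i < n\<close>]
      gdist_U_landmark[OF _ _ assms(2) \<open>j < n\<close>]
    unfolding resolves_def uv(1,2) by metis
qed

lemma separates_edges_small:
  "separates_edges 3 [(A, 0), (D, 0)]" "separates_edges 4 [(A, 0), (D, 0)]"
  "separates_edges 5 [(A, 0), (D, 0)]" "separates_edges 6 [(C, 0), (C, 1)]"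
  "separates_edges 7 [(A, 0), (D, 0)]" "separates_edges 8 [(C, 0), (D, 3)]"
  by code_simp+

(* Used with Q the indices of the edges of one type that (C, 0) does not resolve; the shift
   by h moves each of them outside Q. *)
lemma separated_at_or_after_shift:
  assumes "\<And>j. j < n \<Longrightarrow> \<not> Q j \<Longrightarrow> P j" "Q i \<Longrightarrow> \<not> Q (rel_idx n h i)"
    and "i < n" "h < n"
  shows "P i \<or> P (rel_idx n h i)"
  using assms rel_idx_less by blast

lemma AB_cycle_edge_separated:
  assumes "9 \<le> n" "n = 2 * h + 1 \<or> n = 2 * h + 2" "i < n"
  shows "cyc_dist n i \<noteq> cyc_dist n (cyc_succ n i) \<or>
         cyc_dist n (rel_idx n h i) \<noteq> cyc_dist n (cyc_succ n (rel_idx n h i))"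
  by (rule separated_at_or_after_shift[where Q = "\<lambda>j. 2 * j + 1 = n"];
      use assms in \<open>auto simp: cyc_dist_defs rel_idx_def; arith\<close>)

lemma E_cycle_edge_separated:
  assumes "9 \<le> n" "n = 2 * h + 1 \<or> n = 2 * h + 2" "i < n"
  shows "cyc_dist_left n i \<noteq> cyc_dist_left n (cyc_succ n i) \<or>
         cyc_dist_left n (rel_idx n h i) \<noteq> cyc_dist_left n (cyc_succ n (rel_idx n h i))"
  by (rule separated_at_or_after_shift[where Q = "\<lambda>j. j + 1 = n \<or> 2 * j + 2 = n"];
      use assms in \<open>auto simp: cyc_dist_defs rel_idx_def; arith\<close>)

lemma BC_edge_separated:
  assumes "9 \<le> n" "n = 2 * h + 1 \<or> n = 2 * h + 2" "i < n"
  shows "cyc_dist n i + 1 \<noteq> inner_dist (cyc_dist n i) \<or>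
         cyc_dist n (rel_idx n h i) + 1 \<noteq> inner_dist (cyc_dist n (rel_idx n h i))"
  by (rule separated_at_or_after_shift[where Q = "\<lambda>j. j = 1 \<or> j + 1 = n"];
      use assms in \<open>auto simp: cyc_dist_defs rel_idx_def; arith\<close>)

lemma CD_edge_separated:
  assumes "9 \<le> n" "n = 2 * h + 1 \<or> n = 2 * h + 2" "i < n"
  shows "inner_dist (cyc_dist n i) \<noteq> inner_dist (cyc_dist_left n i) + 1 \<or>
         inner_dist (cyc_dist n (rel_idx n h i)) \<noteq>
           inner_dist (cyc_dist_left n (rel_idx n h i)) + 1"
  by (rule separated_at_or_after_shift[where Q = "\<lambda>j. n \<le> 2 * j \<and> j + 3 \<le> n"];
      use assms in \<open>auto simp: cyc_dist_defs rel_idx_def; arith\<close>)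

lemma DE_edge_separated:
  assumes "9 \<le> n" "n = 2 * h + 1 \<or> n = 2 * h + 2" "i < n"
  shows "inner_dist (cyc_dist_left n i) + 1 \<noteq> cyc_dist_left n i + 2 \<or>
         inner_dist (cyc_dist_left n (rel_idx n h i)) + 1 \<noteq>
           cyc_dist_left n (rel_idx n h i) + 2"
  by (rule separated_at_or_after_shift[where Q = "\<lambda>j. j = 1 \<or> j + 2 = n"];
      use assms in \<open>auto simp: cyc_dist_defs rel_idx_def; arith\<close>)

lemma DC_edge_separated:
  assumes "9 \<le> n" "n = 2 * h + 1 \<or> n = 2 * h + 2" "i < n"
  shows "inner_dist (cyc_dist_left n i) + 1 \<noteq> inner_dist (cyc_dist n (cyc_succ n i)) \<or>
         inner_dist (cyc_dist_left n (rel_idx n h i)) + 1 \<noteq>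
           inner_dist (cyc_dist n (cyc_succ n (rel_idx n h i)))"
  by (rule separated_at_or_after_shift[where Q = "\<lambda>j. 2 \<le> j \<and> 2 * j + 2 \<le> n"];
      use assms in \<open>auto simp: cyc_dist_defs rel_idx_def; arith\<close>)

lemma C_pair_separates_arc:
  assumes "9 \<le> n" "n = 2 * h + 1 \<or> n = 2 * h + 2" "U_arc n (t, i) (s, j)"
  shows "origin_dist n C (t, i) \<noteq> origin_dist n C (s, j) \<or>
         origin_dist n C (t, rel_idx n h i) \<noteq> origin_dist n C (s, rel_idx n h j)"
proof -
  have "h < n" "i < n" "j < n" using assms by (auto simp: U_arc_iff)
  have shift: "rel_idx n h (cyc_succ n k) = cyc_succ n (rel_idx n h k)" if "k < n" for k
    using rel_idx_succ[OF that \<open>h < n\<close>] .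
  from assms(3) show ?thesis
    unfolding U_arc_iff
  proof (elim conjE disjE)
    assume "t = A" "s = A" "j = cyc_succ n i"
    then show ?thesis
      using AB_cycle_edge_separated[OF assms(1,2) \<open>i < n\<close>] shift[OF \<open>i < n\<close>] by simp
  next
    assume "t = B" "s = B" "j = cyc_succ n i"
    then show ?thesis
      using AB_cycle_edge_separated[OF assms(1,2) \<open>i < n\<close>] shift[OF \<open>i < n\<close>] by simp
  next
    assume "t = E" "s = E" "j = cyc_succ n i"
    then show ?thesis
      using E_cycle_edge_separated[OF assms(1,2) \<open>i < n\<close>] shift[OF \<open>i < n\<close>] by simp
  next
    assume "t = A" "s = B" "j = i"
    then show ?thesis by simp
  next
    assume "t = B" "s = C" "j = i"
    then show ?thesis using BC_edge_separated[OF assms(1,2) \<open>i < n\<close>] by simp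
  next
    assume "t = C" "s = D" "j = i"
    then show ?thesis using CD_edge_separated[OF assms(1,2) \<open>i < n\<close>] by simp
  next
    assume "t = D" "s = E" "j = i"
    then show ?thesis using DE_edge_separated[OF assms(1,2) \<open>i < n\<close>] by simp
  next
    assume "t = C" "s = D" "i = cyc_succ n j"
    then show ?thesis
      using DC_edge_separated[OF assms(1,2) \<open>j < n\<close>] shift[OF \<open>j < n\<close>] by auto
  qed
qed

lemma separates_edges_antipodal_C:
  assumes "9 \<le> n"
  shows "separates_edges n [(C, 0), (C, (n - 1) div 2)]"
  unfolding separates_edges_def
proof (intro ballI)
  define h where "h = (n - 1) div 2"
  have h: "n = 2 * h + 1 \<or> n = 2 * h + 2" using assms unfolding h_def by arith
  fix i t y assume "i \<in> set [0..<n]" "y \<in> set (U_nbrs n (t, i))"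
  moreover obtain s j where y: "y = (s, j)" by fastforce
  ultimately have "U_adj n (t, i) (s, j)" by (simp add: U_adj_iff_nbrs)
  then have "origin_dist n C (t, i) \<noteq> origin_dist n C (s, j) \<or>
      origin_dist n C (t, rel_idx n h i) \<noteq> origin_dist n C (s, rel_idx n h j)"
    unfolding U_adj_def using C_pair_separates_arc[OF assms h] by metis
  then show "\<exists>w\<in>set [(C, 0), (C, (n - 1) div 2)].
      landmark_dist n w (t, i) \<noteq> landmark_dist n w y"
    by (auto simp: y h_def landmark_dist_def)
qed

lemma exists_separating_pair:
  assumes "3 \<le> n"
  obtains w w' where "w \<noteq> w'" "{w, w'} \<subseteq> {A, C, D} \<times> {..<n}" "separates_edges n [w, w']"
proof -
  consider "n \<in> {3, 4, 5, 7}" | "n = 6" | "n = 8" | "9 \<le> n" using assms by force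
  then show ?thesis
  proof cases
    case 1
    then show ?thesis by (intro that[of "(A, 0)" "(D, 0)"]) (use separates_edges_small in auto)
  next
    case 2
    then show ?thesis by (intro that[of "(C, 0)" "(C, 1)"]) (use separates_edges_small in auto)
  next
    case 3
    then show ?thesis by (intro that[of "(C, 0)" "(D, 3)"]) (use separates_edges_small in auto)
  next
    case 4
    then show ?thesis
      by (intro that[of "(C, 0)" "(C, (n - 1) div 2)"] separates_edges_antipodal_C) auto
  qed
qed

lemma card_U_local_resolving_set_ge_2:
  assumes "3 \<le> n" "finite W" "local_resolving_set (U_verts n) (U_adj n) W"
  shows "2 \<le> card W"
proof -
  define x :: "nat \<Rightarrow> vkind \<times> nat"
    where "x = (!) [(B, 0), (C, 0), (D, 0), (C, 1), (B, 1), (B, 0)]"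
  have "cyc_succ n 0 = 1" "cyc_pred n 1 = 0"
    using assms(1) by (simp_all add: cyc_succ_def cyc_pred_def)
  then have walk: "U_adj n (x i) (x (Suc i))" if "i < 5" for i
    using that assms(1) by (auto simp: x_def less_Suc_eq numeral_eq_Suc U_adj_iff_nbrs)
  have in_V: "x i \<in> U_verts n" if "i \<le> 5" for i
    using that assms(1) by (auto simp: x_def le_Suc_eq numeral_eq_Suc U_verts_def)
  show ?thesis
    by (rule card_local_resolving_set_ge_2[of "U_adj n" 5 x, OF U_adj_sym in_V walk _ _ assms(2,3)])
      (simp_all add: x_def)
qed

theorem theorem4p1:
  fixes n :: nat
  assumes "n \<ge> 3"
  shows "lmd (U_verts n) (U_adj n) = 2"
  unfolding lmd_def
proof (rule Least_equality)
  obtain w w' where "w \<noteq> w'" "{w, w'} \<subseteq> {A, C, D} \<times> {..<n}" "separates_edges n [w, w']"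
    using exists_separating_pair assms by blast
  then have "local_resolving_set (U_verts n) (U_adj n) {w, w'}"
    using local_resolving_set_if_separates_edges[of "[w, w']" n] assms by simp
  then show "\<exists>W. finite W \<and> local_resolving_set (U_verts n) (U_adj n) W \<and> card W = 2"
    using \<open>w \<noteq> w'\<close> by (intro exI[of _ "{w, w'}"]) auto
next
  fix k assume "\<exists>W. finite W \<and> local_resolving_set (U_verts n) (U_adj n) W \<and> card W = k"
  then show "2 \<le> k" using card_U_local_resolving_set_ge_2 assms by blast
qed

end
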